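(* Let $N\ge3$, (V),(K) with $b_0>b_*(a_0)$, and $f:\mathbb{R}\to\mathbb{R}$ continuous with $|f(t)|\le M\min\{|t|^{q_1-1},|t|^{q_2-1}\}$ for all $t$, some $M>0$, $q_1\in\mathcal{I}_1(a_0,b_0)$, $q_2\in\mathcal{I}_2(a,b)$. If there exists $\theta<2$ with $\liminf_{t\to0^+}F(t)/t^\theta>0$, then the functional $I:H^1_{V,r}\to\mathbb{R}$ takes negative values.
   Context: $F(t)=\int_0^tf(s)ds$; $I(u)=\frac12\|u\|^2-\int_{\mathbb{R}^N}K(|x|)F(u)dx$ on $H^1_{V,r}$. (V): $V:(0,\infty)\to[0,\infty)$ continuous with $\liminf_{r\to0^+}V(r)/r^{a_0}>0$, $\liminf_{r\to\infty}V(r)/r^a>0$. (K): $K:(0,\infty)\to(0,\infty)$ continuous with $\limsup_{r\to0^+}K(r)/r^{b_0}<\infty$, $\limsup_{r\to\infty}K(r)/r^b<\infty$. $H^1_{V,r}$: radial $u\in D^{1,2}(\mathbb{R}^N)$ with $\int V(|x|)u^2<\infty$, norm $\|u\|^2=\int|\nabla u|^2+\int V(|x|)u^2$. $b_*(a_0):=-\infty$ if $a_0<-(2N-2)$, $\min\{a_0,-\frac{N-a_0}{2},-\frac{N+2}{2}\}$ otherwise. $q_*(a_0,b_0):=\max\{1,2\frac{N+b_0}{N+a_0},2\frac{2N-2+2b_0-a_0}{2N-2+a_0}\}$ if $a_0<-(2N-2)$; $\max\{1,2\frac{N+b_0}{N+a_0}\}$ if $-(2N-2)\le a_0<-N$;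 $1$ if $a_0\ge -N$. $q^*(a_0,b_0):=+\infty$ if $a_0\le-(2N-2)$; $2\frac{2N-2+2b_0-a_0}{2N-2+a_0}$ if $-(2N-2)<a_0\le -N$; $\min\{2\frac{N+b_0}{N+a_0},2\frac{2N-2+2b_0-a_0}{2N-2+a_0}\}$ if $-N<a_0<-2$; $2\frac{N+b_0}{N-2}$ if $a_0\ge-2$. $\mathcal{I}_1=(q_*,q^* )$. $q_{**}(a,b):=\max\{1,2\frac{N+b}{N-2}\}$ if $a\le-2$; $\max\{1,2\frac{N+b}{N+a},2\frac{2N-2+2b-a}{2N-2+a}\}$ if $a>-2$; $\mathcal{I}_2=(q_{**},\infty)$. *)

theory Defs
  imports "HOL-Analysis.Analysis"
begin

definition b_star :: "nat \<Rightarrow> real \<Rightarrow> ereal" where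
  "b_star N a0 = (if a0 < - (2 * real N - 2) then -\<infinity>
     else ereal (min a0 (min (- (real N - a0) / 2) (- (real N + 2) / 2))))"

definition q_lower :: "nat \<Rightarrow> real \<Rightarrow> real \<Rightarrow> real" where
  "q_lower N a0 b0 =
     (if a0 < - (2 * real N - 2) then
        max 1 (max (2 * (real N + b0) / (real N + a0))
                   (2 * (2 * real N - 2 + 2 * b0 - a0) / (2 * real N - 2 + a0)))
      else if a0 < - real N then max 1 (2 * (real N + b0) / (real N + a0))
      else 1)"

definition q_upper :: "nat \<Rightarrow> real \<Rightarrow> real \<Rightarrow> ereal" where
  "q_upper N a0 b0 =
     (if a0 \<le> - (2 * real N - 2) then \<infinity>
      else if a0 \<le> - real N then
        ereal (2 * (2 * real N - 2 + 2 * b0 - a0) / (2 * real N - 2 + a0))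
      else if a0 < -2 then
        ereal (min (2 * (real N + b0) / (real N + a0))
                   (2 * (2 * real N - 2 + 2 * b0 - a0) / (2 * real N - 2 + a0)))
      else ereal (2 * (real N + b0) / (real N - 2)))"

definition q_lower2 :: "nat \<Rightarrow> real \<Rightarrow> real \<Rightarrow> real" where
  "q_lower2 N a b =
     (if a \<le> -2 then max 1 (2 * (real N + b) / (real N - 2))
      else max 1 (max (2 * (real N + b) / (real N + a))
                      (2 * (2 * real N - 2 + 2 * b - a) / (2 * real N - 2 + a))))"

definition in_I1 :: "nat \<Rightarrow> real \<Rightarrow> real \<Rightarrow> real \<Rightarrow> bool" where
  "in_I1 N a0 b0 q \<longleftrightarrow> q_lower N a0 b0 < q \<and> ereal q < q_upper N a0 b0"

definition in_I2 :: "nat \<Rightarrow> real \<Rightarrow> real \<Rightarrow> real \<Rightarrow> bool" where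
  "in_I2 N a b q \<longleftrightarrow> q_lower2 N a b < q"

definition test_fun :: "('a::euclidean_space \<Rightarrow> real) \<Rightarrow> ('a \<Rightarrow> 'a) \<Rightarrow> bool" where
  "test_fun \<phi> g \<longleftrightarrow> (\<forall>x. (\<phi> has_derivative (\<lambda>h. g x \<bullet> h)) (at x))
      \<and> continuous_on UNIV g \<and> bounded {x. \<phi> x \<noteq> 0}"

definition weak_grad :: "('a::euclidean_space \<Rightarrow> real) \<Rightarrow> ('a \<Rightarrow> 'a) \<Rightarrow> bool" where
  "weak_grad u G \<longleftrightarrow> (\<forall>\<phi> g. test_fun \<phi> g \<longrightarrow> (\<forall>i\<in>Basis.
      (\<integral>x. u x * (g x \<bullet> i) \<partial>lborel) = - (\<integral>x. (G x \<bullet> i) * \<phi> x \<partial>lborel)))"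

definition L2_grad :: "('a::euclidean_space \<Rightarrow> real) \<Rightarrow> ('a \<Rightarrow> 'a) \<Rightarrow> bool" where
  "L2_grad u G \<longleftrightarrow> G \<in> borel_measurable lborel
      \<and> integrable lborel (\<lambda>x. (norm (G x))\<^sup>2) \<and> weak_grad u G"

definition D12 :: "('a::euclidean_space \<Rightarrow> real) \<Rightarrow> bool" where
  "D12 u \<longleftrightarrow> u \<in> borel_measurable lborel
      \<and> integrable lborel (\<lambda>x. \<bar>u x\<bar> powr (2 * real DIM('a) / (real DIM('a) - 2)))
      \<and> (\<exists>G. L2_grad u G)"

definition wgrad :: "('a::euclidean_space \<Rightarrow> real) \<Rightarrow> 'a \<Rightarrow> 'a" where
  "wgrad u = (SOME G. L2_grad u G)"

definition radial :: "('a::euclidean_space \<Rightarrow> real) \<Rightarrow> bool" where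
  "radial u \<longleftrightarrow> (\<forall>x y. norm x = norm y \<longrightarrow> u x = u y)"

definition H1Vr :: "(real \<Rightarrow> real) \<Rightarrow> ('a::euclidean_space \<Rightarrow> real) \<Rightarrow> bool" where
  "H1Vr V u \<longleftrightarrow> D12 u \<and> radial u \<and> integrable lborel (\<lambda>x. V (norm x) * (u x)\<^sup>2)"

definition normsq :: "(real \<Rightarrow> real) \<Rightarrow> ('a::euclidean_space \<Rightarrow> real) \<Rightarrow> real" where
  "normsq V u = (\<integral>x. (norm (wgrad u x))\<^sup>2 \<partial>lborel) + (\<integral>x. V (norm x) * (u x)\<^sup>2 \<partial>lborel)"

definition primF :: "(real \<Rightarrow> real) \<Rightarrow> real \<Rightarrow> real" where
  "primF f t = (LBINT s=0..t. f s)"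

definition Ifun :: "(real \<Rightarrow> real) \<Rightarrow> (real \<Rightarrow> real) \<Rightarrow> (real \<Rightarrow> real)
                     \<Rightarrow> ('a::euclidean_space \<Rightarrow> real) \<Rightarrow> real" where
  "Ifun V K f u = normsq V u / 2 - (\<integral>x. K (norm x) * primF f (u x) \<partial>lborel)"

end

theory Submission
  imports Defs
begin

text \<open>
  Let \<open>b\<close> be a fixed radial \<open>C\<^sup>1\<close> bump supported in the annulus \<open>1 \<le> |x| \<le> 2\<close>, away from the
  possible singularities of \<open>V\<close> and \<open>K\<close> at the origin. The quadratic part of \<open>I(t b)\<close> is
  \<open>t\<^sup>2 \<parallel>b\<parallel>\<^sup>2\<close>, while \<open>F(s) \<ge> c s\<^sup>\<theta>\<close> for small \<open>s > 0\<close> makes the nonlinear part at least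
  \<open>\<kappa> t\<^sup>\<theta>\<close>; since \<open>\<theta> < 2\<close>, \<open>I(t b) < 0\<close> for small \<open>t > 0\<close>.

  The norm is defined through a weak gradient picked by Hilbert choice, so computing \<open>\<parallel>t b\<parallel>\<close>
  needs uniqueness of square integrable weak gradients. This follows from the fundamental lemma
  of the calculus of variations, proved by approximating indicators of boxes with \<open>C\<^sup>1\<close> test
  functions.
\<close>

definition pos_sq :: "real \<Rightarrow> real" where
  "pos_sq y = (max 0 y)\<^sup>2"

lemma pos_sq_nonneg: "0 \<le> pos_sq y"
  by (simp add: pos_sq_def)

lemma pos_sq_pos_iff: "0 < pos_sq y \<longleftrightarrow> 0 < y"
  by (auto simp: pos_sq_def max_def)

lemma pos_sq_eq_0: "y \<le> 0 \<Longrightarrow> pos_sq y = 0"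
  by (simp add: pos_sq_def)

lemma continuous_on_pos_sq [continuous_intros]:
  "continuous_on S f \<Longrightarrow> continuous_on S (\<lambda>x. pos_sq (f x))"
  unfolding pos_sq_def by (intro continuous_intros)

lemma has_real_derivative_pos_sq: "(pos_sq has_real_derivative 2 * max 0 y) (at y)"
proof (cases y "0::real" rule: linorder_cases)
  case less
  have "((\<lambda>_. 0) has_real_derivative 2 * max 0 y) (at y)"
    using less by (auto intro!: derivative_eq_intros)
  then show ?thesis
    by (rule has_field_derivative_transform_within_open[where S="{..<0}"])
       (use less in \<open>auto simp: pos_sq_def\<close>)
next
  case equal
  have "((\<lambda>h. pos_sq h / h) \<longlongrightarrow> 0) (at (0::real))"
  proof (rule Lim_null_comparison)
    show "\<forall>\<^sub>F h in at 0. norm (pos_sq h / h) \<le> \<bar>h\<bar>"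
      by (intro always_eventually allI) (auto simp: pos_sq_def max_def power2_eq_square)
  qed (auto intro!: tendsto_eq_intros)
  then show ?thesis
    using equal by (simp add: has_field_derivative_iff pos_sq_def)
next
  case greater
  have "((\<lambda>y. y\<^sup>2) has_real_derivative 2 * max 0 y) (at y)"
    using greater by (auto intro!: derivative_eq_intros)
  then show ?thesis
    by (rule has_field_derivative_transform_within_open[where S="{0<..}"])
       (use greater in \<open>auto simp: pos_sq_def\<close>)
qed

lemma has_real_derivative_pos_sq_comp [derivative_intros]:
  "(f has_real_derivative f') (at x within S) \<Longrightarrow>
   ((\<lambda>x. pos_sq (f x)) has_real_derivative 2 * max 0 (f x) * f') (at x within S)"
  using DERIV_chain2[OF has_real_derivative_pos_sq] by (simp add: mult_ac)

section \<open>Test functions and their weak gradients\<close>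

lemma test_fun_continuous: "test_fun \<phi> g \<Longrightarrow> continuous_on UNIV \<phi>"
  unfolding test_fun_def by (meson continuous_at_imp_continuous_on has_derivative_continuous)

lemma test_fun_support:
  fixes \<phi> :: "'a::euclidean_space \<Rightarrow> real"
  assumes "test_fun \<phi> g"
  obtains R where "\<And>x. R < norm x \<Longrightarrow> \<phi> x = 0" "\<And>x. R < norm x \<Longrightarrow> g x = 0"
proof -
  from assms obtain R where R: "\<And>x. R < norm x \<Longrightarrow> \<phi> x = 0"
    unfolding test_fun_def bounded_iff by (metis mem_Collect_eq not_le)
  have "g x = 0" if x: "R < norm x" for x
  proof -
    have "(\<phi> has_derivative (\<lambda>h. g x \<bullet> h)) (at x)"
      using assms by (simp add: test_fun_def)
    moreover have "(\<phi> has_derivative (\<lambda>h. 0)) (at x)"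
      by (rule has_derivative_transform_within_open[of "\<lambda>_. 0" _ x UNIV "{y. R < norm y}"])
         (use x R in \<open>auto intro: open_Collect_less continuous_on_norm_id continuous_on_const\<close>)
    ultimately have "(\<lambda>h. g x \<bullet> h) = (\<lambda>h. 0)"
      by (rule has_derivative_unique)
    then have "g x \<bullet> g x = 0" by meson
    then show ?thesis by simp
  qed
  with R that show ?thesis by blast
qed

lemma test_fun_mult:
  assumes "test_fun \<phi> g" "test_fun \<psi> h"
  shows "test_fun (\<lambda>x. \<phi> x * \<psi> x) (\<lambda>x. \<psi> x *\<^sub>R g x + \<phi> x *\<^sub>R h x)"
  unfolding test_fun_def
proof (intro conjI allI)
  fix x
  have "((\<lambda>x. \<phi> x * \<psi> x) has_derivative (\<lambda>y. \<phi> x * (h x \<bullet> y) + (g x \<bullet> y) * \<psi> x)) (at x)"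
    using assms by (intro has_derivative_mult) (auto simp: test_fun_def)
  then show "((\<lambda>x. \<phi> x * \<psi> x) has_derivative (\<lambda>y. (\<psi> x *\<^sub>R g x + \<phi> x *\<^sub>R h x) \<bullet> y)) (at x)"
    by (simp add: inner_add_left mult_ac add.commute)
next
  show "continuous_on UNIV (\<lambda>x. \<psi> x *\<^sub>R g x + \<phi> x *\<^sub>R h x)"
    using assms test_fun_continuous[OF assms(1)] test_fun_continuous[OF assms(2)]
    by (intro continuous_intros) (auto simp: test_fun_def)
  show "bounded {x. \<phi> x * \<psi> x \<noteq> 0}"
    using assms(1) by (auto simp: test_fun_def intro: bounded_subset)
qed

lemma test_fun_scale:
  assumes "test_fun \<phi> g"
  shows "test_fun (\<lambda>x. t * \<phi> x) (\<lambda>x. t *\<^sub>R g x)"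
  using assms unfolding test_fun_def
  by (auto intro!: derivative_eq_intros continuous_intros intro: bounded_subset)

lemma integrable_continuous_vanishing_outside_ball:
  fixes f :: "'a::euclidean_space \<Rightarrow> real"
  assumes "continuous_on UNIV f" "\<And>x. R < norm x \<Longrightarrow> f x = 0"
  shows "integrable lborel f"
proof -
  have "integrable lborel (\<lambda>x. indicator (cball 0 R) x *\<^sub>R f x)"
    by (rule borel_integrable_compact) (auto intro: continuous_on_subset[OF assms(1)])
  also have "(\<lambda>x. indicator (cball 0 R) x *\<^sub>R f x) = f"
    using assms(2) by (auto simp: indicator_def fun_eq_iff not_le)
  finally show ?thesis .
qed

lemma lborel_integral_translate:
  fixes f :: "'a::euclidean_space \<Rightarrow> real"
  assumes "integrable lborel f"
  shows "integrable lborel (\<lambda>x. f (x + c))" and "(\<integral>x. f (x + c) \<partial>lborel) = (\<integral>x. f x \<partial>lborel)"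
proof -
  have f: "f \<in> borel_measurable borel"
    using assms by simp
  have shift: "(\<lambda>x. f (x + c)) = (\<lambda>x. f (c + x))"
    by (simp add: add.commute)
  show "integrable lborel (\<lambda>x. f (x + c))"
    unfolding shift using assms integrable_distr_eq[of "(+) c" lborel borel f] f
    by (simp add: lborel_distr_plus)
  have "(\<integral>x. f x \<partial>lborel) = integral\<^sup>L (distr lborel borel ((+) c)) f"
    by (simp add: lborel_distr_plus)
  also have "\<dots> = (\<integral>x. f (c + x) \<partial>lborel)"
    by (rule integral_distr) (use f in auto)
  finally show "(\<integral>x. f (x + c) \<partial>lborel) = (\<integral>x. f x \<partial>lborel)"
    unfolding shift by simp
qed

lemma difference_quotient_tendsto:
  fixes w :: "'a::real_inner \<Rightarrow> real"
  assumes "(w has_derivative (\<lambda>h. g \<bullet> h)) (at x)"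
  shows "((\<lambda>t. (w (x + t *\<^sub>R e) - w x) / t) \<longlongrightarrow> g \<bullet> e) (at 0)"
proof -
  have "((\<lambda>t. x + t *\<^sub>R e) has_derivative (\<lambda>t. t *\<^sub>R e)) (at 0)"
    by (auto intro!: derivative_eq_intros)
  moreover have "(w has_derivative (\<lambda>h. g \<bullet> h)) (at (x + 0 *\<^sub>R e))"
    using assms by simp
  ultimately have "((\<lambda>t. w (x + t *\<^sub>R e)) has_derivative (\<lambda>t. g \<bullet> (t *\<^sub>R e))) (at 0)"
    by (rule has_derivative_compose[unfolded o_def])
  then have "((\<lambda>t. w (x + t *\<^sub>R e)) has_real_derivative g \<bullet> e) (at 0)"
    unfolding has_field_derivative_def by (simp add: mult.commute[of _ "g \<bullet> e"])
  then show ?thesis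
    unfolding DERIV_def by simp
qed

lemma test_fun_increment_bound:
  fixes w :: "'a::euclidean_space \<Rightarrow> real"
  assumes w: "test_fun w g"
  obtains B R where "\<And>x s. 0 < s \<Longrightarrow> s \<le> 1 \<Longrightarrow>
    \<bar>w (x + s *\<^sub>R e) - w x\<bar> \<le> B * s * indicator (cball 0 R) x"
proof -
  obtain R where R: "\<And>x. R < norm x \<Longrightarrow> w x = 0"
    by (meson test_fun_support[OF w])
  define C where "C = cball (0::'a) (R + 2 * norm e)"
  have "continuous_on UNIV g"
    using w by (simp add: test_fun_def)
  then have "compact (g ` C)"
    unfolding C_def by (metis compact_cball compact_continuous_image continuous_on_subset top_greatest)
  then obtain B where B: "\<And>y. y \<in> C \<Longrightarrow> norm (g y) \<le> B"
    by (meson bounded_iff compact_imp_bounded image_eqI)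
  have "\<bar>w (x + s *\<^sub>R e) - w x\<bar> \<le> (B * norm e) * s * indicator (cball 0 (R + norm e)) x"
    if s: "0 < s" "s \<le> 1" for x s
  proof (cases "norm x \<le> R + norm e")
    case False
    have "norm x \<le> norm (x + s *\<^sub>R e) + s * norm e"
      using norm_triangle_ineq4[of "x + s *\<^sub>R e" "s *\<^sub>R e"] s by simp
    moreover have "s * norm e \<le> norm e"
      using s by (simp add: mult_left_le_one_le)
    ultimately have "R < norm (x + s *\<^sub>R e)" "R < norm x"
      using False norm_ge_zero[of e] by linarith+
    then show ?thesis
      using R False by simp
  next
    case True
    have "s * norm e \<le> norm e"
      using s by (simp add: mult_left_le_one_le)
    moreover have "norm (x + s *\<^sub>R e) \<le> norm x + s * norm e"
      using norm_triangle_ineq[of x "s *\<^sub>R e"] s by simp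
    ultimately have C: "x \<in> C" "x + s *\<^sub>R e \<in> C"
      unfolding C_def mem_cball_0 using True norm_ge_zero[of e] by linarith+
    have "norm (w (x + s *\<^sub>R e) - w x) \<le> B * norm ((x + s *\<^sub>R e) - x)"
    proof (rule differentiable_bound[where f'="\<lambda>y h. g y \<bullet> h"])
      show "(w has_derivative (\<lambda>h. g y \<bullet> h)) (at y within C)" for y
        using w by (auto simp: test_fun_def intro: has_derivative_at_withinI)
      show "onorm (\<lambda>h. g y \<bullet> h) \<le> B" if "y \<in> C" for y
        using onorm_inner_right[of "\<lambda>h::'a. h" "g y"] B[OF that] by (simp add: onorm_id)
    qed (use C in \<open>auto simp: C_def\<close>)
    then show ?thesis
      using True s by (simp add: mult_ac)
  qed
  then show ?thesis
    by (rule that)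
qed

lemma integral_difference_quotient_eq_0:
  fixes w :: "'a::euclidean_space \<Rightarrow> real"
  assumes "integrable lborel w"
  shows "(\<integral>x. (w (x + h *\<^sub>R e) - w x) / h \<partial>lborel) = 0"
proof -
  note shift = lborel_integral_translate[OF assms, of "h *\<^sub>R e"]
  have "(\<integral>x. (w (x + h *\<^sub>R e) - w x) / h \<partial>lborel) = ((\<integral>x. w (x + h *\<^sub>R e) \<partial>lborel) - (\<integral>x. w x \<partial>lborel)) / h"
    unfolding integral_divide_zero by (rule arg_cong[OF Bochner_Integration.integral_diff[OF shift(1) assms]])
  then show ?thesis
    using shift(2) by simp
qed

lemma filterlim_inverse_Suc_at_0: "filterlim (\<lambda>n. 1 / real (Suc n)) (at 0) sequentially"
  unfolding filterlim_at
proof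
  show "\<forall>\<^sub>F n in sequentially. 1 / real (Suc n) \<in> UNIV \<and> 1 / real (Suc n) \<noteq> 0"
    by simp
  show "(\<lambda>n. 1 / real (Suc n)) \<longlonglongrightarrow> 0"
    using LIMSEQ_Suc[OF lim_const_over_n[of 1]] by simp
qed

lemma integral_test_fun_grad_eq_0:
  fixes w :: "'a::euclidean_space \<Rightarrow> real"
  assumes w: "test_fun w g"
  shows "(\<integral>x. g x \<bullet> e \<partial>lborel) = 0"
proof -
  obtain B R where bound: "\<And>x s. 0 < s \<Longrightarrow> s \<le> 1 \<Longrightarrow>
      \<bar>w (x + s *\<^sub>R e) - w x\<bar> \<le> B * s * indicator (cball 0 R) x"
    using test_fun_increment_bound[OF w] by blast
  obtain R' where "\<And>x. R' < norm x \<Longrightarrow> w x = 0"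
    by (meson test_fun_support[OF w])
  then have w_int: "integrable lborel w"
    by (rule integrable_continuous_vanishing_outside_ball[OF test_fun_continuous[OF w]])
  define s where "s n = 1 / real (Suc n)" for n
  define D where "D n x = (w (x + s n *\<^sub>R e) - w x) / s n" for n x
  have "(\<lambda>n. \<integral>x. D n x \<partial>lborel) \<longlonglongrightarrow> (\<integral>x. g x \<bullet> e \<partial>lborel)"
  proof (rule integral_dominated_convergence[where w="\<lambda>x. B * indicator (cball 0 R) x"])
    show "integrable lborel (\<lambda>x. B * indicator (cball 0 R) x)"
      by (intro integrable_mult_right integrable_real_indicator emeasure_lborel_cball_finite) auto
    show "(\<lambda>x. g x \<bullet> e) \<in> borel_measurable lborel"
      using w unfolding test_fun_def measurable_lborel2
      by (intro borel_measurable_continuous_onI continuous_intros) auto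
    show "D n \<in> borel_measurable lborel" for n
      unfolding D_def using lborel_integral_translate(1)[OF w_int] w_int by measurable
    have s_pos: "0 < s n" "s n \<le> 1" for n
      by (auto simp: s_def)
    show "AE x in lborel. norm (D n x) \<le> B * indicator (cball 0 R) x" for n
      using bound[of "s n"] s_pos[of n] by (simp add: D_def divide_le_eq mult_ac)
    show "AE x in lborel. (\<lambda>n. D n x) \<longlonglongrightarrow> g x \<bullet> e"
    proof (rule AE_I2)
      fix x
      have "(w has_derivative (\<lambda>h. g x \<bullet> h)) (at x)"
        using w by (simp add: test_fun_def)
      from filterlim_compose[OF difference_quotient_tendsto[OF this] filterlim_inverse_Suc_at_0]
      show "(\<lambda>n. D n x) \<longlonglongrightarrow> g x \<bullet> e"
        by (simp only: D_def s_def o_def)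
    qed
  qed
  then have "(\<lambda>n. 0) \<longlonglongrightarrow> (\<integral>x. g x \<bullet> e \<partial>lborel)"
    by (simp only: D_def integral_difference_quotient_eq_0[OF w_int])
  then show ?thesis
    using LIMSEQ_unique tendsto_const by blast
qed

lemma test_fun_weak_grad:
  fixes w :: "'a::euclidean_space \<Rightarrow> real"
  assumes w: "test_fun w gw"
  shows "weak_grad w gw"
  unfolding weak_grad_def
proof (intro allI impI ballI)
  fix \<phi> :: "'a \<Rightarrow> real" and g i
  assume \<phi>: "test_fun \<phi> g"
  obtain R where R: "\<And>x. R < norm x \<Longrightarrow> w x = 0" "\<And>x. R < norm x \<Longrightarrow> gw x = 0"
    by (meson test_fun_support[OF w])
  have gw_cont: "continuous_on UNIV gw" and g_cont: "continuous_on UNIV g"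
    using w \<phi> by (auto simp: test_fun_def)
  have int1: "integrable lborel (\<lambda>x. (gw x \<bullet> i) * \<phi> x)"
    by (rule integrable_continuous_vanishing_outside_ball[where R=R])
       (auto intro!: continuous_intros gw_cont test_fun_continuous[OF \<phi>] simp: R)
  have int2: "integrable lborel (\<lambda>x. w x * (g x \<bullet> i))"
    by (rule integrable_continuous_vanishing_outside_ball[where R=R])
       (auto intro!: continuous_intros g_cont test_fun_continuous[OF w] simp: R)
  have "(\<integral>x. (\<phi> x *\<^sub>R gw x + w x *\<^sub>R g x) \<bullet> i \<partial>lborel) = 0"
    by (rule integral_test_fun_grad_eq_0[OF test_fun_mult[OF w \<phi>]])
  then have "(\<integral>x. (gw x \<bullet> i) * \<phi> x \<partial>lborel) + (\<integral>x. w x * (g x \<bullet> i) \<partial>lborel) = 0"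
    using Bochner_Integration.integral_add[OF int1 int2] by (simp add: inner_add_left mult_ac)
  then show "(\<integral>x. w x * (g x \<bullet> i) \<partial>lborel) = - (\<integral>x. (gw x \<bullet> i) * \<phi> x \<partial>lborel)"
    by linarith
qed

lemma test_fun_L2_grad:
  fixes w :: "'a::euclidean_space \<Rightarrow> real"
  assumes w: "test_fun w gw"
  shows "L2_grad w gw"
proof -
  obtain R where "\<And>x. R < norm x \<Longrightarrow> gw x = 0"
    by (meson test_fun_support[OF w])
  moreover have "continuous_on UNIV gw"
    using w by (simp add: test_fun_def)
  ultimately show ?thesis
    unfolding L2_grad_def measurable_lborel2 using test_fun_weak_grad[OF w]
    by (auto intro!: borel_measurable_continuous_onI continuous_intros
        integrable_continuous_vanishing_outside_ball[where R=R])
qed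

section \<open>The fundamental lemma of the calculus of variations\<close>

definition interval_bump :: "real \<Rightarrow> real \<Rightarrow> real \<Rightarrow> real" where
  "interval_bump \<alpha> \<beta> s = pos_sq (s - \<alpha>) * pos_sq (\<beta> - s)"

definition interval_cutoff :: "nat \<Rightarrow> real \<Rightarrow> real \<Rightarrow> real \<Rightarrow> real" where
  "interval_cutoff n \<alpha> \<beta> s = n * interval_bump \<alpha> \<beta> s / (1 + n * interval_bump \<alpha> \<beta> s)"

definition interval_cutoff_deriv :: "nat \<Rightarrow> real \<Rightarrow> real \<Rightarrow> real \<Rightarrow> real" where
  "interval_cutoff_deriv n \<alpha> \<beta> s =
     n * (2 * max 0 (s - \<alpha>) * pos_sq (\<beta> - s) - pos_sq (s - \<alpha>) * (2 * max 0 (\<beta> - s)))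
       / (1 + n * interval_bump \<alpha> \<beta> s)\<^sup>2"

lemma interval_bump_nonneg: "0 \<le> interval_bump \<alpha> \<beta> s"
  by (simp add: interval_bump_def pos_sq_nonneg)

lemma interval_cutoff_denom_pos: "0 < 1 + real n * interval_bump \<alpha> \<beta> s"
  by (simp add: add_pos_nonneg interval_bump_nonneg)

lemma interval_cutoff_has_real_derivative:
  "(interval_cutoff n \<alpha> \<beta> has_real_derivative interval_cutoff_deriv n \<alpha> \<beta> s) (at s)"
  unfolding interval_cutoff_def[abs_def] interval_cutoff_deriv_def interval_bump_def
  using interval_cutoff_denom_pos[of n \<alpha> \<beta> s]
  by (auto intro!: derivative_eq_intros simp: interval_bump_def power2_eq_square algebra_simps)

lemma continuous_on_interval_cutoff: "continuous_on UNIV (interval_cutoff n \<alpha> \<beta>)"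
  by (meson DERIV_isCont continuous_at_imp_continuous_on interval_cutoff_has_real_derivative)

lemma continuous_on_interval_cutoff_deriv: "continuous_on UNIV (interval_cutoff_deriv n \<alpha> \<beta>)"
proof -
  have "1 + real n * (pos_sq (s - \<alpha>) * pos_sq (\<beta> - s)) \<noteq> 0" for s
    using interval_cutoff_denom_pos[of n \<alpha> \<beta> s] by (simp add: interval_bump_def)
  then show ?thesis
    unfolding interval_cutoff_deriv_def[abs_def] interval_bump_def by (intro continuous_intros) simp
qed

lemma interval_cutoff_bounds: "0 \<le> interval_cutoff n \<alpha> \<beta> s" "interval_cutoff n \<alpha> \<beta> s \<le> 1"
  using interval_cutoff_denom_pos[of n \<alpha> \<beta> s] interval_bump_nonneg[of \<alpha> \<beta> s]
  by (simp_all add: interval_cutoff_def divide_simps)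

lemma interval_cutoff_eq_0: "\<not> (\<alpha> < s \<and> s < \<beta>) \<Longrightarrow> interval_cutoff n \<alpha> \<beta> s = 0"
  by (auto simp: interval_cutoff_def interval_bump_def pos_sq_eq_0)

lemma interval_cutoff_tendsto:
  "(\<lambda>n. interval_cutoff n \<alpha> \<beta> s) \<longlonglongrightarrow> (if \<alpha> < s \<and> s < \<beta> then 1 else 0)"
proof (cases "\<alpha> < s \<and> s < \<beta>")
  case True
  then have P: "0 < interval_bump \<alpha> \<beta> s"
    by (simp add: interval_bump_def pos_sq_pos_iff)
  have "filterlim (\<lambda>n. 1 + real n * interval_bump \<alpha> \<beta> s) at_top sequentially"
    by (intro filterlim_tendsto_add_at_top[OF tendsto_const]
        filterlim_at_top_mult_tendsto_pos[OF tendsto_const P filterlim_real_sequentially, simplified mult.commute])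
  then have "(\<lambda>n. 1 - inverse (1 + real n * interval_bump \<alpha> \<beta> s)) \<longlonglongrightarrow> 1 - 0"
    by (intro tendsto_diff tendsto_const tendsto_inverse_0_at_top)
  moreover have "interval_cutoff n \<alpha> \<beta> s = 1 - inverse (1 + real n * interval_bump \<alpha> \<beta> s)" for n
    using interval_cutoff_denom_pos[of n \<alpha> \<beta> s] by (simp add: interval_cutoff_def field_simps)
  ultimately show ?thesis
    using True by simp
next
  case False
  then have "interval_cutoff n \<alpha> \<beta> s = 0" for n
    by (rule interval_cutoff_eq_0)
  with False show ?thesis
    by auto
qed

definition box_cutoff :: "nat \<Rightarrow> 'a::euclidean_space \<Rightarrow> 'a \<Rightarrow> 'a \<Rightarrow> real" where
  "box_cutoff n a b x = (\<Prod>j\<in>Basis. interval_cutoff n (a \<bullet> j) (b \<bullet> j) (x \<bullet> j))"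

definition box_cutoff_grad :: "nat \<Rightarrow> 'a::euclidean_space \<Rightarrow> 'a \<Rightarrow> 'a \<Rightarrow> 'a" where
  "box_cutoff_grad n a b x = (\<Sum>i\<in>Basis. (interval_cutoff_deriv n (a \<bullet> i) (b \<bullet> i) (x \<bullet> i) *
      (\<Prod>j\<in>Basis - {i}. interval_cutoff n (a \<bullet> j) (b \<bullet> j) (x \<bullet> j))) *\<^sub>R i)"

lemma test_fun_box_cutoff: "test_fun (box_cutoff n a b) (box_cutoff_grad n a b)"
  unfolding test_fun_def
proof (intro conjI allI)
  fix x :: 'a
  have "((\<lambda>x. interval_cutoff n (a \<bullet> i) (b \<bullet> i) (x \<bullet> i)) has_derivative
       (\<lambda>y. (y \<bullet> i) * interval_cutoff_deriv n (a \<bullet> i) (b \<bullet> i) (x \<bullet> i))) (at x)" for i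
    by (rule DERIV_compose_FDERIV[OF interval_cutoff_has_real_derivative]) (auto intro!: derivative_eq_intros)
  then have "(box_cutoff n a b has_derivative (\<lambda>y. \<Sum>i\<in>Basis.
      (y \<bullet> i) * interval_cutoff_deriv n (a \<bullet> i) (b \<bullet> i) (x \<bullet> i) *
      (\<Prod>j\<in>Basis - {i}. interval_cutoff n (a \<bullet> j) (b \<bullet> j) (x \<bullet> j)))) (at x)"
    unfolding box_cutoff_def[abs_def] by (rule has_derivative_prod)
  moreover have "(\<lambda>y. \<Sum>i\<in>Basis. (y \<bullet> i) * interval_cutoff_deriv n (a \<bullet> i) (b \<bullet> i) (x \<bullet> i) *
      (\<Prod>j\<in>Basis - {i}. interval_cutoff n (a \<bullet> j) (b \<bullet> j) (x \<bullet> j))) = (\<lambda>h. box_cutoff_grad n a b x \<bullet> h)"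
    by (auto simp: fun_eq_iff box_cutoff_grad_def inner_sum_left inner_sum_right inner_commute mult_ac intro!: sum.cong)
  ultimately show "(box_cutoff n a b has_derivative (\<lambda>h. box_cutoff_grad n a b x \<bullet> h)) (at x)"
    by simp
next
  have "continuous_on UNIV (\<lambda>x. interval_cutoff n (a \<bullet> i) (b \<bullet> i) (x \<bullet> i))"
       "continuous_on UNIV (\<lambda>x. interval_cutoff_deriv n (a \<bullet> i) (b \<bullet> i) (x \<bullet> i))" for i
    by (auto intro!: continuous_on_compose2[OF continuous_on_interval_cutoff]
        continuous_on_compose2[OF continuous_on_interval_cutoff_deriv] continuous_intros)
  then show "continuous_on UNIV (box_cutoff_grad n a b)"
    unfolding box_cutoff_grad_def[abs_def] by (intro continuous_intros)
next
  have "{x. box_cutoff n a b x \<noteq> 0} \<subseteq> box a b"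
    by (auto simp: box_cutoff_def mem_box) (metis interval_cutoff_eq_0)+
  then show "bounded {x. box_cutoff n a b x \<noteq> 0}"
    by (rule bounded_subset[OF bounded_box])
qed

lemma box_cutoff_tendsto: "(\<lambda>n. box_cutoff n a b x) \<longlonglongrightarrow> indicator (box a b) x"
proof -
  have "(\<lambda>n. box_cutoff n a b x) \<longlonglongrightarrow>
      (\<Prod>j\<in>Basis. if a \<bullet> j < x \<bullet> j \<and> x \<bullet> j < b \<bullet> j then 1 else 0)"
    unfolding box_cutoff_def by (intro tendsto_prod interval_cutoff_tendsto)
  also have "(\<Prod>j\<in>Basis. if a \<bullet> j < x \<bullet> j \<and> x \<bullet> j < b \<bullet> j then 1 else (0::real)) = indicator (box a b) x"
    by (auto simp: indicator_def mem_box)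
  finally show ?thesis .
qed

lemma abs_box_cutoff_le: "\<bar>box_cutoff n a b x\<bar> \<le> indicator (box a b) x"
proof (cases "x \<in> box a b")
  case True
  have "0 \<le> box_cutoff n a b x" "box_cutoff n a b x \<le> 1"
    unfolding box_cutoff_def using interval_cutoff_bounds
    by (auto intro!: prod_nonneg prod_le_1)
  then show ?thesis
    using True by simp
next
  case False
  then obtain j where "j \<in> Basis" "\<not> (a \<bullet> j < x \<bullet> j \<and> x \<bullet> j < b \<bullet> j)"
    by (auto simp: mem_box)
  then have "box_cutoff n a b x = 0"
    unfolding box_cutoff_def by (intro prod_zero) (auto intro!: bexI[of _ j] interval_cutoff_eq_0)
  then show ?thesis
    by simp
qed

lemma integral_box_eq_0_if_orthogonal_to_test_funs:
  fixes h :: "'a::euclidean_space \<Rightarrow> real"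
  assumes h: "h \<in> borel_measurable lborel"
    and loc: "integrable lborel (\<lambda>x. indicator (box a b) x * h x)"
    and orth: "\<And>\<phi> g. test_fun \<phi> g \<Longrightarrow> (\<integral>x. h x * \<phi> x \<partial>lborel) = 0"
  shows "(\<integral>x. indicator (box a b) x * h x \<partial>lborel) = 0"
proof -
  have "(\<lambda>n. \<integral>x. h x * box_cutoff n a b x \<partial>lborel) \<longlonglongrightarrow> (\<integral>x. indicator (box a b) x * h x \<partial>lborel)"
  proof (rule integral_dominated_convergence[where w="\<lambda>x. \<bar>indicator (box a b) x * h x\<bar>"])
    show "(\<lambda>x. indicator (box a b) x * h x) \<in> borel_measurable lborel"
      using loc by (rule borel_measurable_integrable)
    show "(\<lambda>x. h x * box_cutoff n a b x) \<in> borel_measurable lborel" for n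
    proof (rule borel_measurable_times[OF h])
      show "box_cutoff n a b \<in> borel_measurable lborel"
        unfolding measurable_lborel2
        by (rule borel_measurable_continuous_onI[OF test_fun_continuous[OF test_fun_box_cutoff]])
    qed
    show "integrable lborel (\<lambda>x. \<bar>indicator (box a b) x * h x\<bar>)"
      using loc by (rule integrable_abs)
    show "AE x in lborel. (\<lambda>n. h x * box_cutoff n a b x) \<longlonglongrightarrow> indicator (box a b) x * h x"
    proof (rule AE_I2)
      fix x
      show "(\<lambda>n. h x * box_cutoff n a b x) \<longlonglongrightarrow> indicator (box a b) x * h x"
        using tendsto_mult[OF tendsto_const[of "h x"] box_cutoff_tendsto[of a b x]]
        by (simp add: mult.commute)
    qed
    show "AE x in lborel. norm (h x * box_cutoff n a b x) \<le> \<bar>indicator (box a b) x * h x\<bar>" for n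
    proof (rule AE_I2)
      fix x
      have "\<bar>h x\<bar> * \<bar>box_cutoff n a b x\<bar> \<le> \<bar>h x\<bar> * indicator (box a b) x"
        by (rule mult_left_mono[OF abs_box_cutoff_le]) simp
      then show "norm (h x * box_cutoff n a b x) \<le> \<bar>indicator (box a b) x * h x\<bar>"
        by (simp add: abs_mult mult.commute)
    qed
  qed
  moreover have "(\<integral>x. h x * box_cutoff n a b x \<partial>lborel) = 0" for n
    by (rule orth[OF test_fun_box_cutoff])
  ultimately have "(\<lambda>n. 0) \<longlonglongrightarrow> (\<integral>x. indicator (box a b) x * h x \<partial>lborel)"
    by simp
  then show ?thesis
    using LIMSEQ_unique tendsto_const by blast
qed

lemma emeasure_density_box:
  fixes k :: "'a::euclidean_space \<Rightarrow> real"
  assumes "k \<in> borel_measurable lborel" "\<And>x. 0 \<le> k x"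
    and "integrable lborel (\<lambda>x. indicator (box a b) x * k x)"
  shows "emeasure (density lborel (\<lambda>x. ennreal (k x))) (box a b) =
    ennreal (\<integral>x. indicator (box a b) x * k x \<partial>lborel)"
proof -
  have "emeasure (density lborel (\<lambda>x. ennreal (k x))) (box a b) =
      (\<integral>\<^sup>+x. ennreal (indicator (box a b) x * k x) \<partial>lborel)"
    using assms(1) by (subst emeasure_density) (auto intro!: nn_integral_cong simp: indicator_def)
  also have "\<dots> = ennreal (\<integral>x. indicator (box a b) x * k x \<partial>lborel)"
    using assms by (intro nn_integral_eq_integral) auto
  finally show ?thesis .
qed

lemma density_lborel_eqI_boxes:
  fixes k1 k2 :: "'a::euclidean_space \<Rightarrow> ennreal"
  assumes eq: "\<And>a b. emeasure (density lborel k1) (box a b) = emeasure (density lborel k2) (box a b)"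
    and fin: "\<And>a b. emeasure (density lborel k1) (box a b) \<noteq> \<infinity>"
  shows "density lborel k1 = density lborel k2"
proof (rule measure_eqI_generator_eq[where \<Omega>=UNIV and E="range (\<lambda>(a, b). box a b)"
      and A="\<lambda>n::nat. box (- (real n *\<^sub>R One)) (real n *\<^sub>R One)"])
  show "Int_stable (range (\<lambda>(a, b). box a b::'a set))"
    by (auto simp: Int_stable_def box_Int_box)
  show "sets (density lborel k1) = sigma_sets UNIV (range (\<lambda>(a, b). box a b))"
    "sets (density lborel k2) = sigma_sets UNIV (range (\<lambda>(a, b). box a b))"
    by (simp_all add: borel_eq_box)
  show "(\<Union>n::nat. box (- (real n *\<^sub>R One)) (real n *\<^sub>R One)) = (UNIV::'a set)"
    unfolding UN_box_eq_UNIV by auto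
  show "emeasure (density lborel k1) X = emeasure (density lborel k2) X"
    if "X \<in> range (\<lambda>(a, b). box a b)" for X
    using that eq by auto
  show "emeasure (density lborel k1) (box (- (real n *\<^sub>R One)) (real n *\<^sub>R One)) \<noteq> \<infinity>" for n
    by (rule fin)
qed auto

lemma AE_eq_0_if_box_integrals_eq_0:
  fixes h :: "'a::euclidean_space \<Rightarrow> real"
  assumes h: "h \<in> borel_measurable lborel"
    and loc: "\<And>a b. integrable lborel (\<lambda>x. indicator (box a b) x * h x)"
    and zero: "\<And>a b. (\<integral>x. indicator (box a b) x * h x \<partial>lborel) = 0"
  shows "AE x in lborel. h x = 0"
proof -
  define k1 where "k1 x = max 0 (h x)" for x
  define k2 where "k2 x = max 0 (- h x)" for x
  have meas: "k1 \<in> borel_measurable lborel" "k2 \<in> borel_measurable lborel"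
    unfolding k1_def k2_def using h by measurable
  have int: "integrable lborel (\<lambda>x. indicator (box a b) x * k x)"
    if k: "k \<in> borel_measurable lborel" "\<And>x. \<bar>k x\<bar> \<le> \<bar>h x\<bar>" for k a b
  proof (rule Bochner_Integration.integrable_bound[OF integrable_abs[OF loc[of a b]]])
    show "(\<lambda>x. indicator (box a b) x * k x) \<in> borel_measurable lborel"
      by (intro borel_measurable_times borel_measurable_indicator k) simp
    show "AE x in lborel. norm (indicator (box a b) x * k x) \<le> norm \<bar>indicator (box a b) x * h x\<bar>"
      using k(2) by (simp add: abs_mult indicator_def)
  qed
  have int1: "integrable lborel (\<lambda>x. indicator (box a b) x * k1 x)"
    and int2: "integrable lborel (\<lambda>x. indicator (box a b) x * k2 x)" for a b
    by (rule int[OF meas(1)], simp add: k1_def, rule int[OF meas(2)], simp add: k2_def)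
  have nonneg: "0 \<le> k1 x" "0 \<le> k2 x" for x
    by (simp_all add: k1_def k2_def)
  have box_eq: "emeasure (density lborel (\<lambda>x. ennreal (k1 x))) (box a b) =
      emeasure (density lborel (\<lambda>x. ennreal (k2 x))) (box a b)" for a b
  proof -
    have "(\<lambda>x. indicator (box a b) x * k1 x - indicator (box a b) x * k2 x) = (\<lambda>x. indicator (box a b) x * h x)"
      by (auto simp: fun_eq_iff k1_def k2_def max_def)
    then have "(\<integral>x. indicator (box a b) x * k1 x \<partial>lborel) = (\<integral>x. indicator (box a b) x * k2 x \<partial>lborel)"
      using Bochner_Integration.integral_diff[OF int1[of a b] int2[of a b]] zero[of a b] by simp
    then show ?thesis
      by (simp add: emeasure_density_box[OF meas(1) nonneg(1) int1] emeasure_density_box[OF meas(2) nonneg(2) int2])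
  qed
  have "density lborel (\<lambda>x. ennreal (k1 x)) = density lborel (\<lambda>x. ennreal (k2 x))"
    using box_eq by (rule density_lborel_eqI_boxes) (simp add: emeasure_density_box[OF meas(1) nonneg(1) int1])
  then have "AE x in lborel. ennreal (k1 x) = ennreal (k2 x)"
    using meas by (intro sigma_finite_measure.density_unique[OF sigma_finite_lborel]) auto
  then show ?thesis
    by (rule AE_mp) (auto simp: k1_def k2_def max_def split: if_splits)
qed

lemma AE_eq_0_if_orthogonal_to_test_funs:
  fixes h :: "'a::euclidean_space \<Rightarrow> real"
  assumes "h \<in> borel_measurable lborel"
    and "\<And>a b. integrable lborel (\<lambda>x. indicator (box a b) x * h x)"
    and "\<And>\<phi> g. test_fun \<phi> g \<Longrightarrow> (\<integral>x. h x * \<phi> x \<partial>lborel) = 0"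
  shows "AE x in lborel. h x = 0"
  using assms by (intro AE_eq_0_if_box_integrals_eq_0 integral_box_eq_0_if_orthogonal_to_test_funs)

section \<open>Uniqueness of weak gradients and the norm of test functions\<close>

lemma integrable_inner_Basis_mult:
  fixes G :: "'a::euclidean_space \<Rightarrow> 'a"
  assumes G: "G \<in> borel_measurable lborel" "integrable lborel (\<lambda>x. (norm (G x))\<^sup>2)"
    and \<psi>: "\<psi> \<in> borel_measurable lborel" "integrable lborel (\<lambda>x. (\<psi> x)\<^sup>2)"
    and i: "i \<in> Basis"
  shows "integrable lborel (\<lambda>x. (G x \<bullet> i) * \<psi> x)"
proof (rule Bochner_Integration.integrable_bound)
  show "integrable lborel (\<lambda>x. (norm (G x))\<^sup>2 + (\<psi> x)\<^sup>2)"
    using G \<psi> by (intro Bochner_Integration.integrable_add)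
  show "(\<lambda>x. (G x \<bullet> i) * \<psi> x) \<in> borel_measurable lborel"
    using G \<psi> by measurable
  show "AE x in lborel. norm ((G x \<bullet> i) * \<psi> x) \<le> norm ((norm (G x))\<^sup>2 + (\<psi> x)\<^sup>2)"
  proof (rule AE_I2)
    fix x
    have "\<bar>G x \<bullet> i\<bar> * \<bar>\<psi> x\<bar> \<le> norm (G x) * \<bar>\<psi> x\<bar>"
      using i by (intro mult_right_mono Basis_le_norm) auto
    moreover have "2 * norm (G x) * \<bar>\<psi> x\<bar> \<le> (norm (G x))\<^sup>2 + \<bar>\<psi> x\<bar>\<^sup>2"
      by (rule sum_squares_bound)
    moreover have "0 \<le> norm (G x) * \<bar>\<psi> x\<bar>"
      by simp
    ultimately have "\<bar>G x \<bullet> i\<bar> * \<bar>\<psi> x\<bar> \<le> (norm (G x))\<^sup>2 + \<bar>\<psi> x\<bar>\<^sup>2"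
      by linarith
    then show "norm ((G x \<bullet> i) * \<psi> x) \<le> norm ((norm (G x))\<^sup>2 + (\<psi> x)\<^sup>2)"
      by (simp add: abs_mult)
  qed
qed

lemma L2_grad_inner_Basis_AE_eq:
  fixes u :: "'a::euclidean_space \<Rightarrow> real"
  assumes G: "L2_grad u G" and H: "L2_grad u H" and i: "i \<in> Basis"
  shows "AE x in lborel. G x \<bullet> i - H x \<bullet> i = 0"
proof -
  have int: "integrable lborel (\<lambda>x. (K x \<bullet> i) * \<psi> x)"
    if "L2_grad u K" "\<psi> \<in> borel_measurable lborel" "integrable lborel (\<lambda>x. (\<psi> x)\<^sup>2)" for K \<psi>
    using that i by (intro integrable_inner_Basis_mult) (auto simp: L2_grad_def)
  show ?thesis
  proof (rule AE_eq_0_if_orthogonal_to_test_funs)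
    have "G \<in> borel_measurable lborel" "H \<in> borel_measurable lborel"
      using G H by (simp_all add: L2_grad_def)
    then show "(\<lambda>x. G x \<bullet> i - H x \<bullet> i) \<in> borel_measurable lborel"
      by measurable
  next
    fix a b :: 'a
    have "(\<lambda>x. (indicator (box a b) x :: real)\<^sup>2) = indicator (box a b)"
      by (auto simp: indicator_def)
    then have "indicator (box a b) \<in> borel_measurable lborel"
      "integrable lborel (\<lambda>x. (indicator (box a b) x :: real)\<^sup>2)"
      by (auto intro!: integrable_real_indicator emeasure_lborel_box_finite)
    from int[OF G this] int[OF H this]
    show "integrable lborel (\<lambda>x. indicator (box a b) x * (G x \<bullet> i - H x \<bullet> i))"
      by (simp add: algebra_simps)
  next
    fix \<phi> :: "'a \<Rightarrow> real" and g
    assume \<phi>: "test_fun \<phi> g"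
    obtain R where "\<And>x. R < norm x \<Longrightarrow> \<phi> x = 0"
      by (meson test_fun_support[OF \<phi>])
    then have "\<phi> \<in> borel_measurable lborel" "integrable lborel (\<lambda>x. (\<phi> x)\<^sup>2)"
      using test_fun_continuous[OF \<phi>] unfolding measurable_lborel2
      by (auto intro!: borel_measurable_continuous_onI
          integrable_continuous_vanishing_outside_ball[where R=R] continuous_intros)
    note \<phi>_int = int[OF G this] int[OF H this]
    have "(\<integral>x. u x * (g x \<bullet> i) \<partial>lborel) = - (\<integral>x. (G x \<bullet> i) * \<phi> x \<partial>lborel)"
      "(\<integral>x. u x * (g x \<bullet> i) \<partial>lborel) = - (\<integral>x. (H x \<bullet> i) * \<phi> x \<partial>lborel)"
      using G H \<phi> i unfolding L2_grad_def weak_grad_def by blast+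
    then have "(\<integral>x. (G x \<bullet> i) * \<phi> x \<partial>lborel) = (\<integral>x. (H x \<bullet> i) * \<phi> x \<partial>lborel)"
      by linarith
    then show "(\<integral>x. (G x \<bullet> i - H x \<bullet> i) * \<phi> x \<partial>lborel) = 0"
      using Bochner_Integration.integral_diff[OF \<phi>_int] by (simp add: left_diff_distrib)
  qed
qed

lemma L2_grad_unique:
  fixes u :: "'a::euclidean_space \<Rightarrow> real"
  assumes "L2_grad u G" and "L2_grad u H"
  shows "AE x in lborel. G x = H x"
proof -
  have "AE x in lborel. \<forall>i\<in>Basis. G x \<bullet> i - H x \<bullet> i = 0"
    using assms by (intro AE_finite_allI[OF finite_Basis] L2_grad_inner_Basis_AE_eq)
  then show ?thesis
  proof (rule AE_mp, intro AE_I2 impI)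
    fix x
    assume "\<forall>i\<in>Basis. G x \<bullet> i - H x \<bullet> i = 0"
    then show "G x = H x"
      by (simp add: euclidean_eq_iff[of "G x"])
  qed
qed

lemma normsq_L2_grad:
  assumes G: "L2_grad u G"
  shows "normsq V u = (\<integral>x. (norm (G x))\<^sup>2 \<partial>lborel) + (\<integral>x. V (norm x) * (u x)\<^sup>2 \<partial>lborel)"
proof -
  have W: "L2_grad u (wgrad u)"
    unfolding wgrad_def by (rule someI[of "L2_grad u", OF G])
  have "(\<integral>x. (norm (wgrad u x))\<^sup>2 \<partial>lborel) = (\<integral>x. (norm (G x))\<^sup>2 \<partial>lborel)"
  proof (rule integral_cong_AE)
    show "AE x in lborel. (norm (wgrad u x))\<^sup>2 = (norm (G x))\<^sup>2"
      using L2_grad_unique[OF W G] by (rule AE_mp) auto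
  qed (use W G in \<open>auto simp: L2_grad_def\<close>)
  then show ?thesis
    by (simp add: normsq_def)
qed

lemma H1Vr_test_fun:
  fixes w :: "'a::euclidean_space \<Rightarrow> real"
  assumes dim: "3 \<le> DIM('a)" and w: "test_fun w g" and "radial w"
    and "integrable lborel (\<lambda>x. V (norm x) * (w x)\<^sup>2)"
  shows "H1Vr V w"
  unfolding H1Vr_def D12_def
proof (intro conjI)
  obtain R where R: "\<And>x. R < norm x \<Longrightarrow> w x = 0"
    by (meson test_fun_support[OF w])
  have "0 < 2 * real DIM('a) / (real DIM('a) - 2)"
    using dim by simp
  then show "integrable lborel (\<lambda>x. \<bar>w x\<bar> powr (2 * real DIM('a) / (real DIM('a) - 2)))"
    using test_fun_continuous[OF w]
    by (intro integrable_continuous_vanishing_outside_ball[where R=R] continuous_on_powr' continuous_intros)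
       (auto simp: R)
  show "w \<in> borel_measurable lborel"
    unfolding measurable_lborel2 by (rule borel_measurable_continuous_onI[OF test_fun_continuous[OF w]])
  show "\<exists>G. L2_grad w G"
    using test_fun_L2_grad[OF w] by blast
qed (use assms in auto)

lemma normsq_scale_test_fun:
  assumes "test_fun w g"
  shows "normsq V (\<lambda>x. t * w x) = t\<^sup>2 * normsq V w"
proof -
  have "(\<lambda>x. V (norm x) * (t * w x)\<^sup>2) = (\<lambda>x. t\<^sup>2 * (V (norm x) * (w x)\<^sup>2))"
    by (simp add: fun_eq_iff power_mult_distrib mult_ac)
  then show ?thesis
    using normsq_L2_grad[OF test_fun_L2_grad[OF test_fun_scale[OF assms]]]
      normsq_L2_grad[OF test_fun_L2_grad[OF assms]]
    by (simp add: power_mult_distrib distrib_left)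
qed

section \<open>A radial bump supported in an annulus\<close>

text \<open>Squaring the positive part makes the bump \<open>C\<^sup>1\<close> across the spheres \<open>|x| = 1\<close> and \<open>|x| = 2\<close>.\<close>

definition annulus_bump :: "'a::euclidean_space \<Rightarrow> real" where
  "annulus_bump x = pos_sq ((x \<bullet> x - 1) * (4 - x \<bullet> x))"

definition annulus_bump_grad :: "'a::euclidean_space \<Rightarrow> 'a" where
  "annulus_bump_grad x = (4 * max 0 ((x \<bullet> x - 1) * (4 - x \<bullet> x)) * (5 - 2 * (x \<bullet> x))) *\<^sub>R x"

lemma annulus_bump_has_derivative:
  "(annulus_bump has_derivative (\<lambda>h. annulus_bump_grad x \<bullet> h)) (at x)"
proof -
  have "((\<lambda>x. (x \<bullet> x - 1) * (4 - x \<bullet> x)) has_derivative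
      (\<lambda>h. 2 * (x \<bullet> h) * (5 - 2 * (x \<bullet> x)))) (at x)"
    by (auto intro!: derivative_eq_intros simp: fun_eq_iff inner_commute algebra_simps)
  from DERIV_compose_FDERIV[OF has_real_derivative_pos_sq this]
  show ?thesis
    by (simp add: annulus_bump_def[abs_def] annulus_bump_grad_def algebra_simps)
qed

lemma annulus_bump_eq_0:
  assumes "norm x < 1 \<or> 2 < norm x"
  shows "annulus_bump x = 0"
proof -
  have "x \<bullet> x < 1 \<or> 4 < x \<bullet> x"
    using assms power_strict_mono[of 2 "norm x" 2] power_strict_mono[of "norm x" 1 2]
    by (auto simp: power2_norm_eq_inner[symmetric])
  then have "(x \<bullet> x - 1) * (4 - x \<bullet> x) \<le> 0"
    by (auto intro: mult_nonpos_nonneg mult_nonneg_nonpos)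
  then show ?thesis
    by (simp add: annulus_bump_def pos_sq_eq_0)
qed

lemma test_fun_annulus_bump:
  "test_fun (annulus_bump :: 'a::euclidean_space \<Rightarrow> real) annulus_bump_grad"
  unfolding test_fun_def
proof (intro conjI allI annulus_bump_has_derivative)
  show "continuous_on UNIV (annulus_bump_grad :: 'a \<Rightarrow> 'a)"
    unfolding annulus_bump_grad_def[abs_def] by (intro continuous_intros)
  have "{x. annulus_bump x \<noteq> 0} \<subseteq> cball (0::'a) 2"
    using annulus_bump_eq_0 by force
  then show "bounded {x::'a. annulus_bump x \<noteq> 0}"
    by (rule bounded_subset[OF bounded_cball])
qed

lemma radial_annulus_bump: "radial annulus_bump"
  unfolding radial_def annulus_bump_def by (metis power2_norm_eq_inner)

lemma annulus_bump_nonneg: "0 \<le> annulus_bump x"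
  by (simp add: annulus_bump_def pos_sq_nonneg)

lemma annulus_bump_le: "annulus_bump x \<le> 6"
proof -
  define p where "p = (x \<bullet> x - 1) * (4 - x \<bullet> x)"
  have "0 \<le> (x \<bullet> x - 5 / 2)\<^sup>2"
    by simp
  then have "p \<le> 9 / 4"
    unfolding p_def by (simp add: power2_eq_square algebra_simps)
  then have "(max 0 p)\<^sup>2 \<le> (9 / 4)\<^sup>2"
    by (intro power_mono) auto
  then show ?thesis
    by (simp add: annulus_bump_def pos_sq_def p_def power2_eq_square)
qed

lemma annulus_bump_ge_1:
  assumes "5 / 4 \<le> norm x" "norm x \<le> 7 / 4"
  shows "1 \<le> annulus_bump x"
proof -
  have "(5 / 4)\<^sup>2 \<le> x \<bullet> x" "x \<bullet> x \<le> (7 / 4)\<^sup>2"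
    using power_mono[OF assms(1), of 2] power_mono[OF assms(2), of 2]
    by (auto simp: power2_norm_eq_inner)
  then have "0 \<le> (x \<bullet> x - 25 / 16) * (49 / 16 - x \<bullet> x)"
    by (intro mult_nonneg_nonneg) (auto simp: power2_eq_square)
  then have "1 \<le> (x \<bullet> x - 1) * (4 - x \<bullet> x)"
    using \<open>(5 / 4)\<^sup>2 \<le> x \<bullet> x\<close> by (simp add: power2_eq_square algebra_simps)
  moreover from this have "1 \<le> ((x \<bullet> x - 1) * (4 - x \<bullet> x))\<^sup>2"
    by (simp add: power2_eq_square) (metis mult_mono' mult_1 zero_le_one)
  ultimately show ?thesis
    by (simp add: annulus_bump_def pos_sq_def)
qed

lemma integrable_radial_annulus_bump:
  fixes W Q :: "real \<Rightarrow> real"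
  assumes W: "continuous_on {0<..} W" and Q: "continuous_on UNIV Q" "Q 0 = 0"
  shows "integrable lborel (\<lambda>x::'a::euclidean_space. W (norm x) * Q (annulus_bump x))"
proof -
  define S where "S = cball (0::'a) 2 - ball 0 1"
  have "continuous_on S (\<lambda>x. W (norm x))"
    by (rule continuous_on_compose2[OF W]) (auto simp: S_def intro!: continuous_intros)
  moreover have "continuous_on S (\<lambda>x. Q (annulus_bump x))"
    by (rule continuous_on_compose2[OF Q(1) continuous_on_subset[OF test_fun_continuous[OF test_fun_annulus_bump]]])
       auto
  ultimately have int: "integrable lborel (\<lambda>x. indicator S x *\<^sub>R (W (norm x) * Q (annulus_bump x)))"
    by (intro borel_integrable_compact continuous_intros) (auto simp: S_def intro: compact_diff)
  have "annulus_bump x = 0" if "x \<notin> S" for x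
    using that annulus_bump_eq_0[of x] by (auto simp: S_def)
  then have "(\<lambda>x. indicator S x *\<^sub>R (W (norm x) * Q (annulus_bump x))) = (\<lambda>x. W (norm x) * Q (annulus_bump x))"
    using Q(2) by (auto simp: fun_eq_iff indicator_def)
  with int show ?thesis
    by simp
qed

lemma H1Vr_scale_annulus_bump:
  assumes "3 \<le> DIM('a::euclidean_space)" "continuous_on {0<..} V"
  shows "H1Vr V (\<lambda>x::'a. t * annulus_bump x)"
proof (rule H1Vr_test_fun[OF assms(1) test_fun_scale[OF test_fun_annulus_bump]])
  show "radial (\<lambda>x::'a. t * annulus_bump x)"
    using radial_annulus_bump unfolding radial_def by metis
  show "integrable lborel (\<lambda>x::'a. V (norm x) * (t * annulus_bump x)\<^sup>2)"
    by (rule integrable_radial_annulus_bump[OF assms(2), where Q="\<lambda>y. (t * y)\<^sup>2"])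
       (auto intro: continuous_intros)
qed

section \<open>Negativity of the functional\<close>

lemma primF_0 [simp]: "primF f 0 = 0"
  by (simp add: primF_def zero_ereal_def)

lemma continuous_on_primF:
  assumes f: "continuous_on UNIV f"
  shows "continuous_on UNIV (primF f)"
proof (rule continuous_at_imp_continuous_on, intro ballI)
  fix x :: real
  have "((\<lambda>u. LBINT y=ereal 0..ereal u. f y) has_vector_derivative f x) (at x within {-\<bar>x\<bar>-1..\<bar>x\<bar>+1})"
    by (rule interval_integral_FTC2) (auto intro: continuous_on_subset[OF f])
  then have "isCont (\<lambda>u. LBINT y=ereal 0..ereal u. f y) x"
    by (simp add: at_within_Icc_at has_vector_derivative_continuous)
  then show "isCont (primF f) x"
    by (simp add: primF_def[abs_def] zero_ereal_def)
qed

lemma Liminf_at_right_0_power_lower_bound: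
  fixes g :: "real \<Rightarrow> real"
  assumes "0 < Liminf (at_right 0) (\<lambda>t. ereal (g t / t powr \<theta>))"
  obtains c \<delta> where "0 < c" "0 < \<delta>" "\<And>s. 0 < s \<Longrightarrow> s < \<delta> \<Longrightarrow> c * s powr \<theta> \<le> g s"
proof -
  obtain c where c: "0 < ereal c" "ereal c < Liminf (at_right 0) (\<lambda>t. ereal (g t / t powr \<theta>))"
    using ereal_dense2[OF assms] by blast
  have "\<forall>\<^sub>F t in at_right 0. ereal c < ereal (g t / t powr \<theta>)"
    by (rule less_LiminfD[OF c(2)])
  then obtain \<delta> where "0 < \<delta>" and \<delta>: "\<And>s. 0 < s \<Longrightarrow> s < \<delta> \<Longrightarrow> c < g s / s powr \<theta>"
    unfolding eventually_at_right_field by auto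
  moreover have "c * s powr \<theta> \<le> g s" if "0 < s" "s < \<delta>" for s
    using \<delta>[OF that] that by (simp add: pos_less_divide_eq)
  ultimately show ?thesis
    using c(1) that by auto
qed

lemma power_lower_bound_raise_exponent:
  fixes g :: "real \<Rightarrow> real"
  assumes "0 < c" "\<theta> \<le> th" and lower: "\<And>s. 0 < s \<Longrightarrow> s < \<delta> \<Longrightarrow> c * s powr \<theta> \<le> g s"
    and s: "0 < s" "s < min \<delta> 1"
  shows "c * s powr th \<le> g s"
proof -
  have "s powr th \<le> s powr \<theta>"
    using assms by (intro powr_mono') auto
  then show ?thesis
    using lower[of s] s \<open>0 < c\<close> by (smt (verit) mult_left_mono min_less_iff_conj)
qed

lemma annulus_bump_ge_1_on_ball:
  assumes "e \<in> Basis" "x \<in> cball ((3 / 2) *\<^sub>R e) (1 / 4)"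
  shows "5 / 4 \<le> norm x" "1 \<le> annulus_bump x"
proof -
  have "\<bar>norm ((3 / 2) *\<^sub>R e) - norm x\<bar> \<le> 1 / 4"
    using assms(2) norm_triangle_ineq3[of "(3 / 2) *\<^sub>R e" x] by (simp add: dist_norm)
  then have "\<bar>3 / 2 - norm x\<bar> \<le> 1 / 4"
    using assms(1) by simp
  then have "5 / 4 \<le> norm x \<and> norm x \<le> 7 / 4"
    unfolding abs_le_iff by linarith
  then show "5 / 4 \<le> norm x" "1 \<le> annulus_bump x"
    by (auto intro: annulus_bump_ge_1)
qed

lemma radial_weight_pos_lower_bound:
  fixes K :: "real \<Rightarrow> real" and S :: "'a::real_normed_vector set"
  assumes K: "continuous_on {0<..} K" "\<And>r. 0 < r \<Longrightarrow> 0 < K r" and S: "compact S" "0 \<notin> S"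
  obtains k where "0 < k" "\<And>x. x \<in> S \<Longrightarrow> k \<le> K (norm x)"
proof (cases "S = {}")
  case False
  have "norm ` S \<subseteq> {0<..}"
    using S(2) by force
  then have "continuous_on S (\<lambda>x. K (norm x))"
    by (intro continuous_on_compose2[OF K(1)] continuous_intros)
  then obtain y where "y \<in> S" and "\<And>x. x \<in> S \<Longrightarrow> K (norm y) \<le> K (norm x)"
    using continuous_attains_inf[OF S(1) False] by blast
  moreover have "0 < K (norm y)"
    using K(2) S(2) \<open>y \<in> S\<close> by (metis zero_less_norm_iff)
  ultimately show ?thesis
    using that by blast
qed (auto intro: that[of 1])

lemma annulus_bump_integrand_bounds:
  fixes K F :: "real \<Rightarrow> real"
  assumes K: "\<And>r. 0 < r \<Longrightarrow> 0 < K r" and F0: "F 0 = 0" and c: "0 < c" "0 \<le> th"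
    and F_lower: "\<And>s. 0 < s \<Longrightarrow> s < d \<Longrightarrow> c * s powr th \<le> F s"
    and t: "0 < t" "6 * t < d"
  shows "0 \<le> K (norm x) * F (t * annulus_bump x)"
    and "1 \<le> annulus_bump x \<Longrightarrow> c * t powr th \<le> F (t * annulus_bump x)"
proof -
  have small: "t * annulus_bump x < d"
    using mult_left_mono[OF annulus_bump_le[of x], of t] t by linarith
  show "0 \<le> K (norm x) * F (t * annulus_bump x)"
  proof (cases "annulus_bump x = 0")
    case False
    then have "0 < norm x" "0 < t * annulus_bump x"
      using annulus_bump_eq_0[of x] annulus_bump_nonneg[of x] t by force+
    moreover have "0 \<le> c * (t * annulus_bump x) powr th"
      using c by simp
    ultimately show ?thesis
      using K F_lower[OF _ small] by (smt (verit) mult_nonneg_nonneg)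
  qed (simp add: F0)
  assume "1 \<le> annulus_bump x"
  then have "c * t powr th \<le> c * (t * annulus_bump x) powr th"
    using t c by (intro mult_left_mono powr_mono2) auto
  also have "\<dots> \<le> F (t * annulus_bump x)"
    using \<open>1 \<le> annulus_bump x\<close> t small by (intro F_lower) auto
  finally show "c * t powr th \<le> F (t * annulus_bump x)" .
qed

lemma integral_radial_annulus_bump_lower_bound:
  fixes K F :: "real \<Rightarrow> real"
  assumes K: "continuous_on {0<..} K" "\<And>r. 0 < r \<Longrightarrow> 0 < K r"
    and F: "continuous_on UNIV F" "F 0 = 0"
    and c: "0 < c" "0 \<le> th"
    and F_lower: "\<And>s. 0 < s \<Longrightarrow> s < d \<Longrightarrow> c * s powr th \<le> F s"
  obtains \<kappa> where "0 < \<kappa>"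
    "\<And>t. 0 < t \<Longrightarrow> 6 * t < d \<Longrightarrow>
      \<kappa> * t powr th \<le> (\<integral>x. K (norm x) * F (t * annulus_bump x) \<partial>(lborel :: 'a::euclidean_space measure))"
proof -
  obtain e :: 'a where e: "e \<in> Basis"
    using nonempty_Basis by blast
  define S where "S = cball ((3 / 2) *\<^sub>R e) (1 / 4)"
  have S: "5 / 4 \<le> norm x" "1 \<le> annulus_bump x" if "x \<in> S" for x
    using annulus_bump_ge_1_on_ball[OF e] that by (auto simp: S_def)
  have "0 \<notin> S"
    using S(1)[of 0] by auto
  then obtain k where k: "0 < k" "\<And>x. x \<in> S \<Longrightarrow> k \<le> K (norm x)"
    using radial_weight_pos_lower_bound[OF K, of S] by (auto simp: S_def)
  define \<kappa> where "\<kappa> = k * c * measure lborel S"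
  have "0 < \<kappa>"
    using k c by (simp add: \<kappa>_def S_def)
  moreover have "\<kappa> * t powr th \<le> (\<integral>x. K (norm x) * F (t * annulus_bump (x::'a)) \<partial>lborel)"
    if t: "0 < t" "6 * t < d" for t
  proof -
    note bounds = annulus_bump_integrand_bounds[where K=K and F=F, OF K(2) F(2) c F_lower t]
    have "indicator S x * (k * (c * t powr th)) \<le> K (norm x) * F (t * annulus_bump x)" for x
    proof (cases "x \<in> S")
      case True
      have "k * (c * t powr th) \<le> K (norm x) * F (t * annulus_bump x)"
        using k True c by (intro mult_mono k(2) bounds(2) S) (auto intro: order.trans[OF less_imp_le])
      then show ?thesis
        using True by simp
    qed (simp add: bounds(1))
    then have "(\<integral>x. indicator S x * (k * (c * t powr th)) \<partial>lborel) \<le>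
        (\<integral>x. K (norm x) * F (t * annulus_bump (x::'a)) \<partial>lborel)"
      unfolding S_def using F
      by (intro Bochner_Integration.integral_mono integrable_mult_left integrable_real_indicator
          emeasure_lborel_cball_finite integrable_radial_annulus_bump[OF K(1), where Q="\<lambda>y. F (t * y)"])
         (auto intro!: continuous_on_compose2[OF F(1)] continuous_intros)
    then show ?thesis
      by (simp add: \<kappa>_def mult_ac)
  qed
  ultimately show ?thesis
    using that by blast
qed

lemma exists_square_below_power:
  fixes A \<kappa> th d :: real
  assumes \<kappa>: "0 < \<kappa>" and th: "th < 2" and d: "0 < d"
  obtains t where "0 < t" "t < d" "t\<^sup>2 * A / 2 < \<kappa> * t powr th"
proof -
  define B where "B = max A 0"
  define q where "q = \<kappa> / (B + 1)"
  define t where "t = min (d / 2) (q powr (1 / (2 - th)))"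
  have B: "0 \<le> B" "A \<le> B"
    by (simp_all add: B_def)
  have q: "0 < q"
    using \<kappa> B by (simp add: q_def)
  have t: "0 < t" "t < d"
    using d q by (auto simp: t_def)
  have "t powr (2 - th) \<le> (q powr (1 / (2 - th))) powr (2 - th)"
    using t th by (intro powr_mono2) (auto simp: t_def)
  also have "\<dots> = q"
    using th q by (simp add: powr_powr)
  finally have t_q: "t powr (2 - th) \<le> q" .
  have "t\<^sup>2 = t powr th * t powr (2 - th)"
    using t by (simp add: powr_add[symmetric])
  then have "t\<^sup>2 * A / 2 \<le> t powr th * t powr (2 - th) * B / 2"
    using B by (simp add: mult_left_mono divide_right_mono)
  also have "\<dots> \<le> t powr th * q * B / 2"
    using t_q B by (intro divide_right_mono mult_right_mono mult_left_mono) auto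
  also have "\<dots> = \<kappa> * t powr th * (B / (2 * (B + 1)))"
    using B by (simp add: q_def field_simps)
  also have "\<dots> < \<kappa> * t powr th"
    using \<kappa> t B by (simp add: divide_less_eq)
  finally show ?thesis
    using t that by blast
qed

theorem mainTheorem10:
  fixes V K f :: "real \<Rightarrow> real"
    and a0 a b0 b M q1 q2 :: real
  assumes dim: "DIM('a::euclidean_space) \<ge> 3"
    and V_cont: "continuous_on {0<..} V"
    and V_nonneg: "\<forall>r>0. V r \<ge> 0"
    and V0: "Liminf (at_right 0) (\<lambda>r. ereal (V r / r powr a0)) > 0"
    and Vinf: "Liminf at_top (\<lambda>r. ereal (V r / r powr a)) > 0"
    and K_cont: "continuous_on {0<..} K"
    and K_pos: "\<forall>r>0. K r > 0"
    and K0: "Limsup (at_right 0) (\<lambda>r. ereal (K r / r powr b0)) < \<infinity>"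
    and Kinf: "Limsup at_top (\<lambda>r. ereal (K r / r powr b)) < \<infinity>"
    and b0_gt: "ereal b0 > b_star DIM('a) a0"
    and f_cont: "continuous_on UNIV f"
    and M_pos: "M > 0"
    and q1: "in_I1 DIM('a) a0 b0 q1"
    and q2: "in_I2 DIM('a) a b q2"
    and f_bound: "\<forall>t. \<bar>f t\<bar> \<le> M * min (\<bar>t\<bar> powr (q1 - 1)) (\<bar>t\<bar> powr (q2 - 1))"
    and theta: "\<exists>\<theta><2. Liminf (at_right 0) (\<lambda>t. ereal (primF f t / t powr \<theta>)) > 0"
  shows "\<exists>u :: 'a \<Rightarrow> real. H1Vr V u \<and> Ifun V K f u < 0"
proof -
  obtain \<theta> where "\<theta> < 2" and liminf: "0 < Liminf (at_right 0) (\<lambda>t. ereal (primF f t / t powr \<theta>))"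
    using theta by blast
  obtain c \<delta> where c: "0 < c" and "0 < \<delta>"
    and lower: "\<And>s. 0 < s \<Longrightarrow> s < \<delta> \<Longrightarrow> c * s powr \<theta> \<le> primF f s"
    by (meson Liminf_at_right_0_power_lower_bound[OF liminf])
  \<comment> \<open>Raising \<open>\<theta>\<close> to \<open>0\<close> keeps the bound on \<open>(0, 1)\<close> and makes \<open>s powr th\<close> monotone in \<open>s\<close>.\<close>
  define th where "th = max \<theta> 0"
  define d where "d = min \<delta> 1"
  have F_lower: "c * s powr th \<le> primF f s" if "0 < s" "s < d" for s
    using power_lower_bound_raise_exponent[OF c _ lower] that by (simp add: th_def d_def)
  obtain \<kappa> where "0 < \<kappa>" and \<kappa>: "\<And>t. 0 < t \<Longrightarrow> 6 * t < d \<Longrightarrow>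
      \<kappa> * t powr th \<le> (\<integral>x. K (norm x) * primF f (t * annulus_bump x) \<partial>(lborel :: 'a measure))"
    using integral_radial_annulus_bump_lower_bound[OF K_cont _ continuous_on_primF[OF f_cont] primF_0 c _ F_lower]
      K_pos by (auto simp: th_def)
  have "th < 2" "0 < d / 6"
    using \<open>\<theta> < 2\<close> \<open>0 < \<delta>\<close> by (simp_all add: th_def d_def)
  obtain t where t: "0 < t" "t < d / 6"
    and small: "t\<^sup>2 * normsq V (annulus_bump :: 'a \<Rightarrow> real) / 2 < \<kappa> * t powr th"
    by (rule exists_square_below_power[OF \<open>0 < \<kappa>\<close> \<open>th < 2\<close> \<open>0 < d / 6\<close>,
          where A="normsq V (annulus_bump :: 'a \<Rightarrow> real)"])
  have "\<kappa> * t powr th \<le> (\<integral>x. K (norm x) * primF f (t * annulus_bump x) \<partial>(lborel :: 'a measure))"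
    using \<kappa> t by simp
  then have "Ifun V K f (\<lambda>x::'a. t * annulus_bump x) < 0"
    using small unfolding Ifun_def normsq_scale_test_fun[OF test_fun_annulus_bump] by linarith
  with H1Vr_scale_annulus_bump[OF dim V_cont] show ?thesis
    by blast
qed

end
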